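(* Let $(D,\mathrm{left},\mathrm{right})$ be an interval poset, and let $\le$ be the partial order on $\max(D)$ given by $a\le b$ iff $a=\mathrm{left}(z)$ and $b=\mathrm{right}(z)$ for some $z\in D$. Let $\mathbf{I}(\max(D),\le)$ be the set of closed intervals $[a,b]=\{p\in\max(D): a\le p\le b\}$ with $a\le b$, ordered by reverse inclusion. Then $$\phi:D\to\mathbf{I}(\max(D),\le),\qquad x\mapsto[\mathrm{left}(x),\mathrm{right}(x)]$$ is an order isomorphism.
   Context: For a poset $(D,\sqsubseteq)$, $\max(D)$ is its set of maximal elements and $x\sqcap y$ denotes the infimum of $\{x,y\}$. An interval poset is a poset $D$ with two functions $\mathrm{left},\mathrm{right}:D\to\max(D)$ such that (only the infima named here are assumed to exist): (i) for all $x\in D$, $x=\mathrm{left}(x)\sqcap\mathrm{right}(x)$; (ii) for all $x,y\in D$, if $\mathrm{right}(x)=\mathrm{left}(y)$ then $x\sqcap y$ exists and $\mathrm{left}(x\sqcap y)=\mathrm{left}(x)$, $\mathrm{right}(x\sqcap y)=\mathrm{right}(y)$; (iii) for each $x\in D$ and each $p\in\max(D)$ with $x\sqsubseteq p$, the infima $\mathrm{left}(x)\sqcap p$ and $p\sqcap\mathrm{right}(x)$ exist and $\mathrm{left}(\mathrm{left}(x)\sqcap p)=\mathrm{left}(x)$, $\mathrm{right}(\mathrm{left}(x)\sqcap p)=p$, $\mathrm{left}(p\sqcap\mathrm{right}(x))=p$, $\mathrm{right}(p\sqcap\mathrm{right}(x))=\mathrm{right}(x)$. The relation $\le$ is a partial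 order on $\max(D)$. *)

theory Defs
  imports Main
begin

definition poset_on :: "'a set \<Rightarrow> ('a \<Rightarrow> 'a \<Rightarrow> bool) \<Rightarrow> bool" where
  "poset_on D le \<longleftrightarrow>
     (\<forall>x\<in>D. le x x) \<and>
     (\<forall>x\<in>D. \<forall>y\<in>D. le x y \<and> le y x \<longrightarrow> x = y) \<and>
     (\<forall>x\<in>D. \<forall>y\<in>D. \<forall>z\<in>D. le x y \<and> le y z \<longrightarrow> le x z)"

definition maxs :: "'a set \<Rightarrow> ('a \<Rightarrow> 'a \<Rightarrow> bool) \<Rightarrow> 'a set" where
  "maxs D le = {x \<in> D. \<forall>y\<in>D. le x y \<longrightarrow> y = x}"

definition is_inf :: "'a set \<Rightarrow> ('a \<Rightarrow> 'a \<Rightarrow> bool) \<Rightarrow> 'a \<Rightarrow> 'a \<Rightarrow> 'a \<Rightarrow> bool" where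
  "is_inf D le x y z \<longleftrightarrow> z \<in> D \<and> le z x \<and> le z y \<and>
     (\<forall>w\<in>D. le w x \<and> le w y \<longrightarrow> le w z)"

definition interval_poset ::
  "'a set \<Rightarrow> ('a \<Rightarrow> 'a \<Rightarrow> bool) \<Rightarrow> ('a \<Rightarrow> 'a) \<Rightarrow> ('a \<Rightarrow> 'a) \<Rightarrow> bool" where
  "interval_poset D le left right \<longleftrightarrow>
     poset_on D le \<and>
     (\<forall>x\<in>D. left x \<in> maxs D le \<and> right x \<in> maxs D le) \<and>
     (\<forall>x\<in>D. is_inf D le (left x) (right x) x) \<and>
     (\<forall>x\<in>D. \<forall>y\<in>D. right x = left y \<longrightarrow>
        (\<exists>z. is_inf D le x y z \<and> left z = left x \<and> right z = right y)) \<and>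
     (\<forall>x\<in>D. \<forall>p\<in>maxs D le. le x p \<longrightarrow>
        (\<exists>z. is_inf D le (left x) p z \<and> left z = left x \<and> right z = p) \<and>
        (\<exists>z. is_inf D le p (right x) z \<and> left z = p \<and> right z = right x))"

definition max_le :: "'a set \<Rightarrow> ('a \<Rightarrow> 'a) \<Rightarrow> ('a \<Rightarrow> 'a) \<Rightarrow> 'a \<Rightarrow> 'a \<Rightarrow> bool" where
  "max_le D left right a b \<longleftrightarrow> (\<exists>z\<in>D. a = left z \<and> b = right z)"

definition closed_interval ::
  "'a set \<Rightarrow> ('a \<Rightarrow> 'a \<Rightarrow> bool) \<Rightarrow> ('a \<Rightarrow> 'a) \<Rightarrow> ('a \<Rightarrow> 'a) \<Rightarrow> 'a \<Rightarrow> 'a \<Rightarrow> 'a set" where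
  "closed_interval D le left right a b =
     {p \<in> maxs D le. max_le D left right a p \<and> max_le D left right p b}"

definition intervals ::
  "'a set \<Rightarrow> ('a \<Rightarrow> 'a \<Rightarrow> bool) \<Rightarrow> ('a \<Rightarrow> 'a) \<Rightarrow> ('a \<Rightarrow> 'a) \<Rightarrow> 'a set set" where
  "intervals D le left right =
     {closed_interval D le left right a b | a b.
        a \<in> maxs D le \<and> b \<in> maxs D le \<and> max_le D left right a b}"

end

theory Submission
  imports Defs
begin

text \<open>An element x of an interval poset is the infimum of its endpoints, so it is determined by
  them. If left x \<le> p \<le> right x is witnessed by z and w with right z = p = left w, gluing z and w
  by axiom (ii) yields an element with the endpoints of x, hence x itself, and x \<sqsubseteq> z \<sqsubseteq> p; so
  [left x, right x] consists exactly of the maximal elements above x. Both claims of the theorem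
  follow, since x is the infimum of the two members left x, right x of this interval.\<close>

lemma is_inf_unique:
  assumes "poset_on D le" "is_inf D le a b u" "is_inf D le a b v"
  shows "u = v"
  using assms unfolding poset_on_def is_inf_def by blast

context
  fixes D :: "'a set" and le :: "'a \<Rightarrow> 'a \<Rightarrow> bool" and left right :: "'a \<Rightarrow> 'a"
  assumes ip: "interval_poset D le left right"
begin

lemma interval_poset_poset_on: "poset_on D le"
  using ip unfolding interval_poset_def by blast

lemma interval_poset_ends_maxs: "x \<in> D \<Longrightarrow> left x \<in> maxs D le \<and> right x \<in> maxs D le"
  using ip unfolding interval_poset_def by blast

lemma interval_poset_is_inf_ends: "x \<in> D \<Longrightarrow> is_inf D le (left x) (right x) x"
  using ip unfolding interval_poset_def by blast

lemma interval_poset_le_ends: "x \<in> D \<Longrightarrow> le x (left x) \<and> le x (right x)"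
  using interval_poset_is_inf_ends unfolding is_inf_def by blast

lemma interval_poset_eq_if_ends_eq:
  assumes "x \<in> D" "y \<in> D" "left x = left y" "right x = right y"
  shows "x = y"
  using is_inf_unique[OF interval_poset_poset_on] interval_poset_is_inf_ends assms by metis

lemma interval_poset_glue:
  assumes "z \<in> D" "w \<in> D" "right z = left w"
  obtains u where "u \<in> D" "le u z" "left u = left z" "right u = right w"
  using ip assms unfolding interval_poset_def is_inf_def by metis

lemma mem_closed_interval_ends_iff:
  assumes x: "x \<in> D"
  shows "p \<in> closed_interval D le left right (left x) (right x) \<longleftrightarrow> p \<in> maxs D le \<and> le x p"
proof
  assume "p \<in> closed_interval D le left right (left x) (right x)"
  then have p: "p \<in> maxs D le" and "max_le D left right (left x) p" "max_le D left right p (right x)"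
    unfolding closed_interval_def by auto
  then obtain z w where z: "z \<in> D" "left z = left x" "right z = p"
    and w: "w \<in> D" "left w = p" "right w = right x"
    unfolding max_le_def by metis
  obtain u where u: "u \<in> D" "le u z" "left u = left z" "right u = right w"
    using interval_poset_glue[OF z(1) w(1)] z w by metis
  have "u = x"
    using interval_poset_eq_if_ends_eq[OF u(1) x] u z w by simp
  moreover have "le z p" "p \<in> D"
    using interval_poset_le_ends[OF z(1)] z p unfolding maxs_def by auto
  ultimately have "le x p"
    using interval_poset_poset_on u z unfolding poset_on_def by blast
  with p show "p \<in> maxs D le \<and> le x p" by blast
next
  assume p: "p \<in> maxs D le \<and> le x p"
  then obtain z1 z2 where
    "is_inf D le (left x) p z1" "left z1 = left x" "right z1 = p"
    "is_inf D le p (right x) z2" "left z2 = p" "right z2 = right x"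
    using ip x unfolding interval_poset_def by metis
  then have "max_le D left right (left x) p" "max_le D left right p (right x)"
    unfolding max_le_def is_inf_def by metis+
  with p show "p \<in> closed_interval D le left right (left x) (right x)"
    unfolding closed_interval_def by blast
qed

lemma le_iff_closed_interval_ends_subset:
  assumes x: "x \<in> D" and y: "y \<in> D"
  shows "le x y \<longleftrightarrow>
    closed_interval D le left right (left y) (right y)
      \<subseteq> closed_interval D le left right (left x) (right x)"
proof
  assume "le x y"
  have "p \<in> maxs D le \<and> le x p" if "p \<in> maxs D le" "le y p" for p
    using interval_poset_poset_on x y \<open>le x y\<close> that unfolding poset_on_def maxs_def by blast
  then show "closed_interval D le left right (left y) (right y)
      \<subseteq> closed_interval D le left right (left x) (right x)"
    using mem_closed_interval_ends_iff[OF x] mem_closed_interval_ends_iff[OF y] by blast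
next
  assume sub: "closed_interval D le left right (left y) (right y)
      \<subseteq> closed_interval D le left right (left x) (right x)"
  have "left y \<in> closed_interval D le left right (left y) (right y)"
    "right y \<in> closed_interval D le left right (left y) (right y)"
    using mem_closed_interval_ends_iff[OF y] interval_poset_ends_maxs[OF y]
      interval_poset_le_ends[OF y] by auto
  then have "le x (left y)" "le x (right y)"
    using sub mem_closed_interval_ends_iff[OF x] by auto
  then show "le x y"
    using interval_poset_is_inf_ends[OF y] x unfolding is_inf_def by blast
qed

lemma closed_interval_ends_image_eq_intervals:
  "(\<lambda>x. closed_interval D le left right (left x) (right x)) ` D = intervals D le left right"
  using interval_poset_ends_maxs unfolding intervals_def max_le_def by blast

end

theorem mainTheorem8:
  fixes D :: "'a set" and le :: "'a \<Rightarrow> 'a \<Rightarrow> bool" and left right :: "'a \<Rightarrow> 'a"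
  assumes "interval_poset D le left right"
  defines "\<phi> \<equiv> (\<lambda>x. closed_interval D le left right (left x) (right x))"
  shows "bij_betw \<phi> D (intervals D le left right) \<and>
         (\<forall>x\<in>D. \<forall>y\<in>D. le x y \<longleftrightarrow> \<phi> y \<subseteq> \<phi> x)"
proof -
  have ord: "\<forall>x\<in>D. \<forall>y\<in>D. le x y \<longleftrightarrow> \<phi> y \<subseteq> \<phi> x"
    unfolding \<phi>_def using le_iff_closed_interval_ends_subset[OF assms(1)] by blast
  have "inj_on \<phi> D"
  proof (rule inj_onI)
    fix x y assume "x \<in> D" "y \<in> D" "\<phi> x = \<phi> y"
    with ord interval_poset_poset_on[OF assms(1)] show "x = y"
      unfolding poset_on_def by blast
  qed
  moreover have "\<phi> ` D = intervals D le left right"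
    unfolding \<phi>_def using closed_interval_ends_image_eq_intervals[OF assms(1)] .
  ultimately show ?thesis
    using ord unfolding bij_betw_def by blast
qed

end
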